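(* Let $\{s_k\}_{k\in\mathbb{N}_0}$ be a positive sequence and let $\{\ell_k\}_{k\in\mathbb{N}_0}$ be a sequence of nonnegative integers such that $\{a^{\ell_k}\}_{k\in\mathbb{N}_0}$ is a positive sequence for every $a\in\mathbb{R}$. Then the sequence $\{\tilde s_k\}_{k\in\mathbb{N}_0}$ given by $\tilde s_k=s_{k+\ell_k}$ is a positive sequence.
   Context: A sequence of real numbers $\{s_k\}_{k\in\mathbb{N}_0}$ is called positive if for every $n\in\mathbb{N}_0$ the Hankel matrix $(s_{i+j})_{i,j=0}^n$ is positive semidefinite. The convention $0^0=1$ is used. *)

theory Defs
  imports Complex_Main
begin

definition psd_matrix :: "nat \<Rightarrow> (nat \<Rightarrow> nat \<Rightarrow> real) \<Rightarrow> bool" where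
  "psd_matrix n M \<longleftrightarrow>
     (\<forall>i\<le>n. \<forall>j\<le>n. M i j = M j i) \<and>
     (\<forall>c :: nat \<Rightarrow> real. (\<Sum>i\<le>n. \<Sum>j\<le>n. c i * M i j * c j) \<ge> 0)"

definition hankel :: "(nat \<Rightarrow> real) \<Rightarrow> nat \<Rightarrow> nat \<Rightarrow> real" where
  "hankel s i j = s (i + j)"

definition positive_seq :: "(nat \<Rightarrow> real) \<Rightarrow> bool" where
  "positive_seq s \<longleftrightarrow> (\<forall>n. psd_matrix n (hankel s))"

end

theory Submission
  imports Defs "HOL-Computational_Algebra.Fundamental_Theorem_Algebra"
begin

text \<open>The Riesz functional \<open>x\<^sup>k \<mapsto> s\<^sub>k\<close> of a positive sequence is nonnegative on
  squares of polynomials, hence on sums of squares. For fixed \<open>c\<close>, the polynomial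
  \<open>P(a) = \<Sum>\<^sub>i\<^sub>,\<^sub>j c\<^sub>i c\<^sub>j a\<^bsup>i+j+\<ell>\<^sub>i\<^sub>+\<^sub>j\<^esup>\<close> is a quadratic form of the Hankel matrix of
  \<open>(a\<^bsup>\<ell>\<^sub>k\<^esup>)\<close> in the vector \<open>(c\<^sub>i a\<^sup>i)\<close>, so it is nonnegative on \<open>\<real>\<close>. A nonnegative
  univariate real polynomial is a sum of squares, so the Riesz functional of \<open>s\<close>
  is nonnegative on \<open>P\<close>, and its value there is the quadratic form of the Hankel
  matrix of \<open>(s\<^bsub>k+\<ell>\<^sub>k\<^esub>)\<close> in \<open>c\<close>.\<close>

lemma positive_seq_iff:
  "positive_seq s \<longleftrightarrow> (\<forall>n c. 0 \<le> (\<Sum>i\<le>n. \<Sum>j\<le>n. c i * s (i + j) * c j))"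
  by (simp add: positive_seq_def psd_matrix_def hankel_def add.commute)

definition riesz_functional :: "(nat \<Rightarrow> real) \<Rightarrow> real poly \<Rightarrow> real" where
  "riesz_functional s p = (\<Sum>k\<le>degree p. coeff p k * s k)"

lemma riesz_functional_eq:
  assumes "degree p \<le> N"
  shows "riesz_functional s p = (\<Sum>k\<le>N. coeff p k * s k)"
  unfolding riesz_functional_def
  by (rule sum.mono_neutral_left) (use assms in \<open>auto simp: coeff_eq_0\<close>)

lemma riesz_functional_add:
  "riesz_functional s (p + q) = riesz_functional s p + riesz_functional s q"
proof -
  let ?N = "max (degree p) (degree q)"
  have "riesz_functional s (p + q) = (\<Sum>k\<le>?N. coeff (p + q) k * s k)"
    by (rule riesz_functional_eq) (simp add: degree_add_le)
  also have "\<dots> = (\<Sum>k\<le>?N. coeff p k * s k) + (\<Sum>k\<le>?N. coeff q k * s k)"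
    by (simp add: algebra_simps sum.distrib)
  finally show ?thesis
    using riesz_functional_eq[of p ?N s] riesz_functional_eq[of q ?N s] by simp
qed

lemma riesz_functional_zero [simp]: "riesz_functional s 0 = 0"
  by (simp add: riesz_functional_def)

lemma riesz_functional_sum:
  "finite A \<Longrightarrow> riesz_functional s (\<Sum>i\<in>A. f i) = (\<Sum>i\<in>A. riesz_functional s (f i))"
  by (induction A rule: finite_induct)
     (simp_all add: riesz_functional_add)

lemma riesz_functional_monom: "riesz_functional s (monom c m) = c * s m"
proof -
  have "riesz_functional s (monom c m) = (\<Sum>k\<le>m. coeff (monom c m) k * s k)"
    by (rule riesz_functional_eq) (simp add: degree_monom_le)
  also have "\<dots> = (\<Sum>k\<le>m. if k = m then c * s m else 0)"
    by (rule sum.cong) auto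
  finally show ?thesis by simp
qed

lemma riesz_functional_square_nonneg:
  assumes "positive_seq s"
  shows "0 \<le> riesz_functional s (g * g)"
proof -
  let ?n = "degree g"
  have "g * g = (\<Sum>i\<le>?n. monom (coeff g i) i) * (\<Sum>j\<le>?n. monom (coeff g j) j)"
    by (simp add: poly_as_sum_of_monoms)
  also have "\<dots> = (\<Sum>i\<le>?n. \<Sum>j\<le>?n. monom (coeff g i * coeff g j) (i + j))"
    by (simp add: sum_product mult_monom)
  finally have "riesz_functional s (g * g)
      = (\<Sum>i\<le>?n. \<Sum>j\<le>?n. coeff g i * s (i + j) * coeff g j)"
    by (simp add: riesz_functional_sum riesz_functional_monom mult_ac)
  then show ?thesis
    using assms by (simp add: positive_seq_iff)
qed

definition sum_of_squares :: "'a::comm_ring_1 poly \<Rightarrow> bool" where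
  "sum_of_squares p \<longleftrightarrow> (\<exists>gs. p = (\<Sum>g\<leftarrow>gs. g * g))"

lemma riesz_functional_sum_of_squares_nonneg:
  assumes "positive_seq s" and "sum_of_squares p"
  shows "0 \<le> riesz_functional s p"
proof -
  obtain gs where "p = (\<Sum>g\<leftarrow>gs. g * g)"
    using assms(2) sum_of_squares_def by blast
  then show ?thesis
    by (induction gs arbitrary: p)
       (simp_all add: riesz_functional_add
          riesz_functional_square_nonneg[OF assms(1)])
qed

lemma sum_of_squares_square_add_square_mult:
  assumes "sum_of_squares h"
  shows "sum_of_squares (g * g + r * r * h)"
proof -
  obtain gs where gs: "h = (\<Sum>g\<leftarrow>gs. g * g)"
    using assms sum_of_squares_def by blast
  have "r * r * h = (\<Sum>g\<leftarrow>map ((*) r) gs. g * g)"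
    unfolding gs by (induction gs) (simp_all add: algebra_simps)
  then have "g * g + r * r * h = (\<Sum>g\<leftarrow>g # map ((*) r) gs. g * g)"
    by simp
  then show ?thesis
    unfolding sum_of_squares_def by blast
qed

lemma poly_abs_attains_min:
  fixes p :: "real poly"
  obtains x0 where "\<And>x. \<bar>poly p x0\<bar> \<le> \<bar>poly p x\<bar>"
proof (cases "degree p = 0")
  case True
  then obtain c where "p = [:c:]" by (metis degree_eq_zeroE)
  then show ?thesis using that by auto
next
  case False
  obtain a q where pq: "p = pCons a q" by (cases p) auto
  with False have "q \<noteq> 0" by auto
  from poly_infinity[OF this, of "\<bar>poly p 0\<bar>" a] obtain r where
    r: "\<And>z::real. r \<le> norm z \<Longrightarrow> \<bar>poly p 0\<bar> \<le> norm (poly p z)"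
    using pq by blast
  let ?R = "\<bar>r\<bar>"
  have "continuous_on {-?R..?R} (\<lambda>x. \<bar>poly p x\<bar>)"
    by (intro continuous_intros)
  from continuous_attains_inf[OF compact_Icc _ this] obtain x0 where
    x0: "x0 \<in> {-?R..?R}" "\<And>y. y \<in> {-?R..?R} \<Longrightarrow> \<bar>poly p x0\<bar> \<le> \<bar>poly p y\<bar>"
    by auto
  have "\<bar>poly p x0\<bar> \<le> \<bar>poly p x\<bar>" for x
  proof (cases "x \<in> {-?R..?R}")
    case False
    then have "\<bar>poly p 0\<bar> \<le> \<bar>poly p x\<bar>" using r by auto
    moreover have "\<bar>poly p x0\<bar> \<le> \<bar>poly p 0\<bar>" using x0(2)[of 0] by auto
    ultimately show ?thesis by linarith
  qed (use x0 in auto)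
  then show ?thesis using that by blast
qed

text \<open>At a global minimum \<open>x\<^sub>0\<close> the polynomial \<open>p - p(x\<^sub>0)\<close> has a root of even
  multiplicity, because \<open>p'(x\<^sub>0) = 0\<close>.\<close>

lemma nonneg_poly_decompose_at_min:
  fixes p :: "real poly"
  assumes nonneg: "\<And>x. 0 \<le> poly p x"
  obtains \<mu> x0 h where "0 \<le> \<mu>" "\<And>x. 0 \<le> poly h x"
    and "p = [:\<mu>:] + [:-x0, 1:] * [:-x0, 1:] * h"
proof -
  obtain x0 where "\<And>x. \<bar>poly p x0\<bar> \<le> \<bar>poly p x\<bar>"
    using poly_abs_attains_min by blast
  then have min: "\<And>x. poly p x0 \<le> poly p x"
    using nonneg by (metis abs_of_nonneg)
  define \<mu> where "\<mu> = poly p x0"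
  have "poly (p - [:\<mu>:]) x0 = 0" by (simp add: \<mu>_def)
  then obtain q where q: "p - [:\<mu>:] = [:-x0, 1:] * q"
    by (meson dvdE poly_eq_0_iff_dvd)
  have "pderiv p = pderiv (p - [:\<mu>:])" by (simp add: pderiv_diff)
  also have "\<dots> = q + [:-x0, 1:] * pderiv q"
    by (simp only: q pderiv_mult) (simp add: pderiv_pCons)
  finally have "poly q x0 = 0"
    using DERIV_local_min[OF poly_DERIV[of p x0], of 1] min by auto
  then obtain h where h: "q = [:-x0, 1:] * h"
    by (meson dvdE poly_eq_0_iff_dvd)
  have p: "p = [:\<mu>:] + [:-x0, 1:] * [:-x0, 1:] * h"
    using q unfolding h mult.assoc by (simp add: algebra_simps)
  have h_nonneg_off: "0 \<le> poly h x" if "x \<noteq> x0" for x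
  proof -
    have "poly p x - \<mu> = (x - x0)\<^sup>2 * poly h x"
      by (subst p) (simp add: power2_eq_square algebra_simps)
    moreover have "0 \<le> poly p x - \<mu>" using min \<mu>_def by auto
    moreover have "0 < (x - x0)\<^sup>2" using that by simp
    ultimately show ?thesis by (simp add: zero_le_mult_iff)
  qed
  have "0 \<le> poly h x0"
  proof (rule tendsto_lowerbound)
    show "(poly h \<longlongrightarrow> poly h x0) (at x0)"
      by (simp add: isCont_def[symmetric])
    show "\<forall>\<^sub>F y in at x0. 0 \<le> poly h y"
      unfolding eventually_at using h_nonneg_off by (intro exI[of _ 1]) auto
  qed simp
  with h_nonneg_off have "0 \<le> poly h x" for x
    by (cases "x = x0") auto
  moreover have "0 \<le> \<mu>" using nonneg \<mu>_def by simp
  ultimately show ?thesis using that p by blast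
qed

lemma nonneg_poly_sum_of_squares:
  fixes p :: "real poly"
  assumes "\<And>x. 0 \<le> poly p x"
  shows "sum_of_squares p"
  using assms
proof (induction "degree p" arbitrary: p rule: less_induct)
  case less
  obtain \<mu> h x0 where \<mu>: "0 \<le> \<mu>" and h: "\<And>x. 0 \<le> poly h x"
    and p: "p = [:\<mu>:] + [:-x0, 1:] * [:-x0, 1:] * h"
    using nonneg_poly_decompose_at_min[OF less.prems] by metis
  have sqrt_\<mu>: "[:\<mu>:] = [:sqrt \<mu>:] * [:sqrt \<mu>:]"
    using \<mu> by simp
  show ?case
  proof (cases "h = 0")
    case True
    then show ?thesis
      unfolding p sqrt_\<mu> sum_of_squares_def by (intro exI[of _ "[[:sqrt \<mu>:]]"]) simp
  next
    case False
    have "degree ([:-x0, 1:] * [:-x0, 1:] * h) = degree h + 2"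
      using False by (simp add: degree_mult_eq del: mult_pCons_left mult_pCons_right)
    then have "degree p = degree h + 2"
      unfolding p by (subst degree_add_eq_right) simp_all
    then have "degree h < degree p" by simp
    then have "sum_of_squares h" using less.hyps h by blast
    then show ?thesis
      unfolding p sqrt_\<mu> by (rule sum_of_squares_square_add_square_mult)
  qed
qed

theorem mainTheorem4:
  fixes s :: "nat \<Rightarrow> real" and l :: "nat \<Rightarrow> nat"
  assumes "positive_seq s"
    and "\<And>a :: real. positive_seq (\<lambda>k. a ^ l k)"
  shows "positive_seq (\<lambda>k. s (k + l k))"
  unfolding positive_seq_iff
proof (intro allI)
  fix n :: nat and c :: "nat \<Rightarrow> real"
  define P where "P = (\<Sum>i\<le>n. \<Sum>j\<le>n. monom (c i * c j) (i + j + l (i + j)))"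
  have "0 \<le> poly P a" for a
  proof -
    have "poly P a = (\<Sum>i\<le>n. \<Sum>j\<le>n. (c i * a ^ i) * a ^ l (i + j) * (c j * a ^ j))"
      by (simp add: P_def poly_sum poly_monom power_add mult_ac)
    with assms(2)[of a, unfolded positive_seq_iff, rule_format, where n = n and c = "\<lambda>i. c i * a ^ i"]
    show ?thesis by simp
  qed
  then have "0 \<le> riesz_functional s P"
    by (intro riesz_functional_sum_of_squares_nonneg assms(1) nonneg_poly_sum_of_squares)
  then show "0 \<le> (\<Sum>i\<le>n. \<Sum>j\<le>n. c i * s (i + j + l (i + j)) * c j)"
    by (simp add: P_def riesz_functional_sum riesz_functional_monom mult_ac)
qed

end
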